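(* Let $u$ be a unit vector of the form $\frac{1}{\sqrt5^{\,\ell}}\begin{bmatrix}\alpha\\\beta\end{bmatrix}$ with $\ell\in\mathbb N$ and $\alpha,\beta\in\mathbb Z[i]$, whose least denominator exponent is $(0,\ell)$. Then there exists a Pauli+$V$ circuit $W$ of $V$-count $\ell$ such that $Wu=e_1=\begin{bmatrix}1\\0\end{bmatrix}$.
   Context: The Pauli gates are $X=\begin{bmatrix}0&1\\1&0\end{bmatrix}$, $Y=\begin{bmatrix}0&-i\\i&0\end{bmatrix}$, $Z=\begin{bmatrix}1&0\\0&-1\end{bmatrix}$; the $V$-gates are $V_X=\frac{1}{\sqrt5}\begin{bmatrix}1&2i\\2i&1\end{bmatrix}$, $V_Y=\frac{1}{\sqrt5}\begin{bmatrix}1&2\\-2&1\end{bmatrix}$, $V_Z=\frac{1}{\sqrt5}\begin{bmatrix}1+2i&0\\0&1-2i\end{bmatrix}$ and their inverses. A Pauli+$V$ circuit is a finite product of Pauli gates and $V$-gates; its $V$-count is the number of $V$-gates occurring in it. For a vector $v\in\mathbb C^2$ that can be written as $\frac{1}{\sqrt2^{\,k}\sqrt5^{\,\ell}}\begin{bmatrix}\alpha\\\beta\end{bmatrix}$ with $k,\ell\in\mathbb N$, $0\le k\le2$, $\alpha,\beta\in\mathbb Z[i]$, its least denominator exponent is the pair $(k_0,\ell_0)$ where $k_0$ (resp. $\ell_0$) is the least $k$ (resp. least $\ell$) for which such a representation exists. *)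

theory Defs
  imports "HOL-Analysis.Analysis"
begin

definition gauss_int :: "complex \<Rightarrow> bool" where
  "gauss_int z \<longleftrightarrow> Re z \<in> \<int> \<and> Im z \<in> \<int>"

definition mat2 :: "complex \<Rightarrow> complex \<Rightarrow> complex \<Rightarrow> complex \<Rightarrow> complex^2^2" where
  "mat2 a b c d = vector [vector [a, b], vector [c, d]]"

definition vec2 :: "complex \<Rightarrow> complex \<Rightarrow> complex^2" where
  "vec2 a b = vector [a, b]"

datatype gate = PauliX | PauliY | PauliZ | VX | VY | VZ | VXinv | VYinv | VZinv

definition s5 :: complex where "s5 = complex_of_real (sqrt 5)"

fun gate_mat :: "gate \<Rightarrow> complex^2^2" where
  "gate_mat PauliX = mat2 0 1 1 0"
| "gate_mat PauliY = mat2 0 (-\<i>) \<i> 0"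
| "gate_mat PauliZ = mat2 1 0 0 (-1)"
| "gate_mat VX = mat2 (1 / s5) (2*\<i> / s5) (2*\<i> / s5) (1 / s5)"
| "gate_mat VY = mat2 (1 / s5) (2 / s5) (-2 / s5) (1 / s5)"
| "gate_mat VZ = mat2 ((1 + 2*\<i>) / s5) 0 0 ((1 - 2*\<i>) / s5)"
| "gate_mat VXinv = matrix_inv (mat2 (1 / s5) (2*\<i> / s5) (2*\<i> / s5) (1 / s5))"
| "gate_mat VYinv = matrix_inv (mat2 (1 / s5) (2 / s5) (-2 / s5) (1 / s5))"
| "gate_mat VZinv = matrix_inv (mat2 ((1 + 2*\<i>) / s5) 0 0 ((1 - 2*\<i>) / s5))"

fun is_V_gate :: "gate \<Rightarrow> bool" where
  "is_V_gate PauliX = False"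
| "is_V_gate PauliY = False"
| "is_V_gate PauliZ = False"
| "is_V_gate _ = True"

definition circuit_mat :: "gate list \<Rightarrow> complex^2^2" where
  "circuit_mat gs = foldr (\<lambda>g M. gate_mat g ** M) gs (mat 1)"

definition V_count :: "gate list \<Rightarrow> nat" where
  "V_count gs = length (filter is_V_gate gs)"

definition den_repr :: "complex^2 \<Rightarrow> nat \<Rightarrow> nat \<Rightarrow> bool" where
  "den_repr v k l \<longleftrightarrow> k \<le> 2 \<and> (\<exists>\<alpha> \<beta>. gauss_int \<alpha> \<and> gauss_int \<beta> \<and>
      v = (1 / complex_of_real (sqrt 2 ^ k * sqrt 5 ^ l)) *s vec2 \<alpha> \<beta>)"

definition lde :: "complex^2 \<Rightarrow> nat \<times> nat" where
  "lde v = ((LEAST k. \<exists>l. den_repr v k l), (LEAST l. \<exists>k. den_repr v k l))"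

end

theory Submission
  imports Defs
begin

(* Write u = (alpha, beta) / sqrt 5 ^ l with alpha = a + b i and beta = c + d i. Since u is a unit
   vector, a^2 + b^2 + c^2 + d^2 = 5^l. For l > 0 a computation modulo 5 shows that one of the six
   circuits VZ, X VZ X, VX, Z VX Z, VY, Z VY Z (numerators 1 +- 2i, +-2i, +-2 over sqrt 5) maps
   (alpha, beta) to sqrt 5 * (alpha', beta') with alpha', beta' again Gaussian integers. All gates
   are unitary, so the image of u is a unit vector with denominator sqrt 5 ^ (l - 1), and induction
   on l applies. For l = 0 the vector is i^k times a basis vector, and X Y Z = i I supplies the
   phases. *)

lemma mat2_mult_vec2: "mat2 p q r t *v vec2 x y = vec2 (p*x + q*y) (r*x + t*y)"
  by (simp add: vec_eq_iff forall_2 mat2_def vec2_def matrix_vector_mult_def sum_2)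

lemma mat2_mult_mat2:
  "mat2 a b c d ** mat2 a' b' c' d' = mat2 (a*a' + b*c') (a*b' + b*d') (c*a' + d*c') (c*b' + d*d')"
  by (simp add: vec_eq_iff forall_2 mat2_def matrix_matrix_mult_def sum_2)

lemma mat_1_eq_mat2: "mat 1 = mat2 1 0 0 1"
  by (simp add: vec_eq_iff forall_2 mat2_def mat_def)

lemma vec2_nth: "vec2 (v$1) (v$2) = v"
  by (simp add: vec_eq_iff forall_2 vec2_def)

lemma scalar_mult_vec2: "c *s vec2 x y = vec2 (c*x) (c*y)"
  by (simp add: vec_eq_iff forall_2 vec2_def)

lemma norm_vec2: "norm (vec2 x y) = sqrt ((cmod x)\<^sup>2 + (cmod y)\<^sup>2)"
  by (simp add: norm_vec_def L2_set_def sum_2 vec2_def)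

lemma norm_scalar_mult_vec2: "norm (k *s vec2 x y) = cmod k * norm (vec2 x y)"
  by (simp add: scalar_mult_vec2 norm_vec2 norm_mult power_mult_distrib real_sqrt_mult
      flip: distrib_left)

lemma matrix_inv_eqI:
  fixes A B :: "'a::comm_ring_1^'n^'n"
  assumes "A ** B = mat 1" "B ** A = mat 1"
  shows "matrix_inv A = B"
proof -
  have "\<exists>A'. A ** A' = mat 1 \<and> A' ** A = mat 1" using assms by blast
  then have inv: "A ** matrix_inv A = mat 1" "matrix_inv A ** A = mat 1"
    unfolding matrix_inv_def by (metis (mono_tags, lifting) someI_ex)+
  have "matrix_inv A = matrix_inv A ** (A ** B)" by (simp add: assms)
  also have "\<dots> = B" by (simp add: matrix_mul_assoc inv)
  finally show ?thesis .
qed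

lemma s5_nonzero: "s5 \<noteq> 0"
  by (simp add: s5_def)

lemma s5_mult_s5: "s5 * s5 = 5"
  by (simp add: s5_def flip: of_real_mult)

lemma gate_mat_VXinv: "gate_mat VXinv = mat2 (1/s5) (-2*\<i>/s5) (-2*\<i>/s5) (1/s5)"
  by (simp, rule matrix_inv_eqI) (simp_all add: mat2_mult_mat2 mat_1_eq_mat2 field_simps s5_mult_s5)

lemma gate_mat_VYinv: "gate_mat VYinv = mat2 (1/s5) (-2/s5) (2/s5) (1/s5)"
  by (simp, rule matrix_inv_eqI) (simp_all add: mat2_mult_mat2 mat_1_eq_mat2 field_simps s5_mult_s5)

lemma gate_mat_VZinv: "gate_mat VZinv = mat2 ((1-2*\<i>)/s5) 0 0 ((1+2*\<i>)/s5)"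
  by (simp, rule matrix_inv_eqI) (simp_all add: mat2_mult_mat2 mat_1_eq_mat2 field_simps s5_mult_s5)

lemma norm_gate_mat_vec: "norm (gate_mat g *v v) = norm v"
proof -
  obtain x y where v: "v = vec2 x y" using vec2_nth by metis
  show ?thesis unfolding v
    by (cases g) (simp_all only: gate_mat.simps(1-6) gate_mat_VXinv gate_mat_VYinv gate_mat_VZinv,
        simp_all add: mat2_mult_vec2 norm_vec2 s5_def cmod_power2 power_divide
         add_divide_distrib diff_divide_distrib, simp_all add: field_simps power2_eq_square)
qed

lemma circuit_mat_Nil_vec [simp]: "circuit_mat [] *v v = v"
  by (simp add: circuit_mat_def)

lemma circuit_mat_Cons_vec [simp]:
  "circuit_mat (g # W) *v v = gate_mat g *v (circuit_mat W *v v)"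
  by (simp add: circuit_mat_def matrix_vector_mul_assoc)

lemma circuit_mat_append_vec:
  "circuit_mat (W @ W') *v v = circuit_mat W *v (circuit_mat W' *v v)"
  by (induction W) simp_all

lemma norm_circuit_mat_vec: "norm (circuit_mat W *v v) = norm v"
  by (induction W) (simp_all add: norm_gate_mat_vec)

lemma V_count_append: "V_count (W @ W') = V_count W + V_count W'"
  by (simp add: V_count_def)

definition phase_circuit :: "nat \<Rightarrow> gate list" where
  "phase_circuit k = concat (replicate k [PauliX, PauliY, PauliZ])"

lemma V_count_phase_circuit: "V_count (phase_circuit k) = 0"
  by (induction k) (simp_all add: phase_circuit_def V_count_def)

lemma circuit_mat_XYZ: "circuit_mat [PauliX, PauliY, PauliZ] *v v = \<i> *s v"
proof -
  obtain x y where v: "v = vec2 x y" using vec2_nth by metis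
  show ?thesis unfolding v by (simp add: mat2_mult_vec2 scalar_mult_vec2)
qed

lemma circuit_mat_phase_circuit: "circuit_mat (phase_circuit k) *v v = \<i>^k *s v"
proof (induction k)
  case 0
  then show ?case by (simp add: phase_circuit_def)
next
  case (Suc k)
  have "phase_circuit (Suc k) = [PauliX, PauliY, PauliZ] @ phase_circuit k"
    by (simp add: phase_circuit_def)
  then show ?case
    by (simp only: circuit_mat_append_vec Suc circuit_mat_XYZ) (simp add: vector_smult_assoc)
qed

abbreviation gauss :: "int \<Rightarrow> int \<Rightarrow> complex" where
  "gauss a b \<equiv> Complex (of_int a) (of_int b)"

lemma gauss_int_iff: "gauss_int z \<longleftrightarrow> (\<exists>a b. z = gauss a b)"
  by (auto simp: gauss_int_def complex_eq_iff elim!: Ints_cases)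

lemma i_power_3k_mult_i_power_k: "\<i>^(3*k) * \<i>^k = 1"
proof -
  have "\<i>^(3*k) * \<i>^k = (\<i>^4)^k" by (simp flip: power_add power_mult)
  then show ?thesis by simp
qed

lemma gauss_unit_eq_i_power:
  assumes "a\<^sup>2 + b\<^sup>2 = 1"
  shows "\<exists>k. gauss a b = \<i>^k"
proof -
  have "a\<^sup>2 \<le> 1" "b\<^sup>2 \<le> 1"
    using assms zero_le_power2[of a] zero_le_power2[of b] by linarith+
  then have "a \<in> {-1, 0, 1}" "b \<in> {-1, 0, 1}" by (auto simp: abs_square_le_1)
  then have "gauss a b \<in> {1, \<i>, -1, -\<i>}"
    using assms by (auto simp: complex_eq_iff)
  then show ?thesis
    by (auto intro: exI[of _ 0] exI[of _ 1] exI[of _ 2] exI[of _ 3] simp: numeral_3_eq_3)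
qed

lemma Pauli_circuit_to_e1:
  assumes "a\<^sup>2 + b\<^sup>2 + c\<^sup>2 + d\<^sup>2 = 1"
  shows "\<exists>W. V_count W = 0 \<and> circuit_mat W *v vec2 (gauss a b) (gauss c d) = vec2 1 0"
proof -
  have "0 \<le> a\<^sup>2 + b\<^sup>2" "0 \<le> c\<^sup>2 + d\<^sup>2" by simp_all
  then have "a\<^sup>2 + b\<^sup>2 = 0 \<or> c\<^sup>2 + d\<^sup>2 = 0" using assms by presburger
  then consider "a\<^sup>2 + b\<^sup>2 = 1" "c = 0" "d = 0" | "c\<^sup>2 + d\<^sup>2 = 1" "a = 0" "b = 0"
    using assms by (auto simp: algebra_simps sum_power2_eq_zero_iff)
  then show ?thesis
  proof cases
    case 1
    then obtain k where "gauss a b = \<i>^k" using gauss_unit_eq_i_power by blast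
    then have "circuit_mat (phase_circuit (3*k)) *v vec2 (gauss a b) (gauss c d) = vec2 1 0"
      using 1 by (simp add: circuit_mat_phase_circuit scalar_mult_vec2 i_power_3k_mult_i_power_k
          flip: zero_complex.code)
    then show ?thesis using V_count_phase_circuit by blast
  next
    case 2
    then obtain k where "gauss c d = \<i>^k" using gauss_unit_eq_i_power by blast
    then have "circuit_mat (phase_circuit (3*k) @ [PauliX]) *v vec2 (gauss a b) (gauss c d)
        = vec2 1 0"
      using 2 by (simp add: circuit_mat_append_vec circuit_mat_phase_circuit mat2_mult_vec2
          scalar_mult_vec2 i_power_3k_mult_i_power_k flip: zero_complex.code)
    moreover have "V_count (phase_circuit (3*k) @ [PauliX]) = 0"
      by (simp add: V_count_append V_count_phase_circuit) (simp add: V_count_def)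
    ultimately show ?thesis by blast
  qed
qed

lemma dvd_square_diff_square_mod: "(n::int) dvd x\<^sup>2 - (x mod n)\<^sup>2"
proof -
  have "x\<^sup>2 - (x mod n)\<^sup>2 = (x - x mod n) * (x + x mod n)"
    by (simp add: power2_eq_square algebra_simps)
  then show ?thesis by (simp add: minus_mod_eq_mult_div)
qed

lemma five_dvd_sum_four_squares_residues:
  "\<forall>x\<in>{0,1,2,3,4::int}. \<forall>y\<in>{0,1,2,3,4}. \<forall>z\<in>{0,1,2,3,4}. \<forall>w\<in>{0,1,2,3,4}.
    5 dvd x\<^sup>2 + y\<^sup>2 + z\<^sup>2 + w\<^sup>2 \<longrightarrow>
      5 dvd x - 2*y \<and> 5 dvd z + 2*w \<or> 5 dvd x + 2*y \<and> 5 dvd z - 2*w \<or>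
      5 dvd x - 2*w \<and> 5 dvd z - 2*y \<or> 5 dvd x + 2*w \<and> 5 dvd z + 2*y \<or>
      5 dvd x + 2*z \<and> 5 dvd y + 2*w \<or> 5 dvd x - 2*z \<and> 5 dvd y - 2*w"
  by simp

lemma five_dvd_sum_four_squares_cases:
  fixes a b c d :: int
  assumes "5 dvd a\<^sup>2 + b\<^sup>2 + c\<^sup>2 + d\<^sup>2"
  shows "5 dvd a - 2*b \<and> 5 dvd c + 2*d \<or> 5 dvd a + 2*b \<and> 5 dvd c - 2*d \<or>
    5 dvd a - 2*d \<and> 5 dvd c - 2*b \<or> 5 dvd a + 2*d \<and> 5 dvd c + 2*b \<or>
    5 dvd a + 2*c \<and> 5 dvd b + 2*d \<or> 5 dvd a - 2*c \<and> 5 dvd b - 2*d"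
proof -
  have residue: "x mod 5 \<in> {0,1,2,3,4}" for x :: int
    using pos_mod_sign[of 5 x] pos_mod_bound[of 5 x] by auto
  have mod_5: "5 dvd x mod 5 - 2*(y mod 5) \<longleftrightarrow> 5 dvd x - 2*y"
    "5 dvd x mod 5 + 2*(y mod 5) \<longleftrightarrow> 5 dvd x + 2*y" for x y :: int
    by presburger+
  have "(a mod 5)\<^sup>2 + (b mod 5)\<^sup>2 + (c mod 5)\<^sup>2 + (d mod 5)\<^sup>2 = (a\<^sup>2 + b\<^sup>2 + c\<^sup>2 + d\<^sup>2)
     - ((a\<^sup>2 - (a mod 5)\<^sup>2) + (b\<^sup>2 - (b mod 5)\<^sup>2) + (c\<^sup>2 - (c mod 5)\<^sup>2) + (d\<^sup>2 - (d mod 5)\<^sup>2))"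
    by simp
  also have "5 dvd \<dots>"
    by (intro dvd_diff dvd_add assms dvd_square_diff_square_mod)
  finally show ?thesis
    using five_dvd_sum_four_squares_residues[rule_format,
        OF residue[of a] residue[of b] residue[of c] residue[of d]]
    by (simp only: mod_5)
qed



lemma circuit_mat_vec2_eq_s5_scaled:
  assumes "\<And>x y. circuit_mat G *v vec2 x y = vec2 ((p*x + q*y) / s5) ((r*x + t*y) / s5)"
    and "p*\<alpha> + q*\<beta> = 5*\<alpha>'" and "r*\<alpha> + t*\<beta> = 5*\<beta>'"
  shows "circuit_mat G *v vec2 \<alpha> \<beta> = s5 *s vec2 \<alpha>' \<beta>'"
proof -
  have "5 * z / s5 = s5 * z" for z
    using s5_nonzero by (simp add: field_simps flip: s5_mult_s5)
  then show ?thesis using assms by (simp add: scalar_mult_vec2)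
qed

(* E.g. (1 + 2i)(a + b i) = (a - 2b) + (2a + b) i, and 5 dvd a - 2b forces 5 dvd 2a + b; so each
   disjunct of five_dvd_sum_four_squares_cases makes all numerators of one circuit divisible by 5. *)
lemma one_V_circuit_extracts_s5:
  assumes "5 dvd a\<^sup>2 + b\<^sup>2 + c\<^sup>2 + d\<^sup>2"
  obtains G \<alpha>' \<beta>' where "V_count G = 1" "gauss_int \<alpha>'" "gauss_int \<beta>'"
    "circuit_mat G *v vec2 (gauss a b) (gauss c d) = s5 *s vec2 \<alpha>' \<beta>'"
proof -
  note result = that
  have reduce: thesis if "V_count G = 1"
    and "\<And>x y. circuit_mat G *v vec2 x y = vec2 ((p*x + q*y) / s5) ((r*x + t*y) / s5)"
    and "p * gauss a b + q * gauss c d = 5 * gauss A B"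
    and "r * gauss a b + t * gauss c d = 5 * gauss C D"
    for G p q r t A B C D
    using result[of G] that circuit_mat_vec2_eq_s5_scaled[of G p q r t] gauss_int_iff by metis
  note compute = V_count_def mat2_mult_vec2 add_divide_distrib diff_divide_distrib complex_eq_iff
    algebra_simps
  from five_dvd_sum_four_squares_cases[OF assms] show thesis
  proof (elim disjE conjE dvdE)
    fix A B assume "a - 2*b = 5*A" "c + 2*d = 5*B"
    then show thesis
      by (intro reduce[of "[VZ]" "1 + 2*\<i>" 0 0 "1 - 2*\<i>" A "2*A + b" B "d - 2*B"])
        (simp_all add: compute)
  next
    fix A B assume "a + 2*b = 5*A" "c - 2*d = 5*B"
    then show thesis
      by (intro reduce[of "[PauliX, VZ, PauliX]" "1 - 2*\<i>" 0 0 "1 + 2*\<i>" A "b - 2*A" B "2*B + d"])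
        (simp_all add: compute)
  next
    fix A B assume "a - 2*d = 5*A" "c - 2*b = 5*B"
    then show thesis
      by (intro reduce[of "[VX]" 1 "2*\<i>" "2*\<i>" 1 A "b + 2*B" B "d + 2*A"])
        (simp_all add: compute)
  next
    fix A B assume "a + 2*d = 5*A" "c + 2*b = 5*B"
    then show thesis
      by (intro reduce[of "[PauliZ, VX, PauliZ]" 1 "-2*\<i>" "-2*\<i>" 1 A "b - 2*B" B "d - 2*A"])
        (simp_all add: compute)
  next
    fix A B assume "a + 2*c = 5*A" "b + 2*d = 5*B"
    then show thesis
      by (intro reduce[of "[VY]" 1 2 "-2" 1 A B "c - 2*A" "d - 2*B"])
        (simp_all add: compute)
  next
    fix A B assume "a - 2*c = 5*A" "b - 2*d = 5*B"
    then show thesis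
      by (intro reduce[of "[PauliZ, VY, PauliZ]" 1 "-2" 2 1 A B "2*A + c" "2*B + d"])
        (simp_all add: compute)
  qed
qed

lemma norm_scaled_gauss_vec2_eq_1_iff:
  "norm ((1 / s5^l) *s vec2 (gauss a b) (gauss c d)) = 1 \<longleftrightarrow> a\<^sup>2 + b\<^sup>2 + c\<^sup>2 + d\<^sup>2 = 5^l"
proof -
  have "norm ((1 / s5^l) *s vec2 (gauss a b) (gauss c d))
      = sqrt (of_int (a\<^sup>2 + b\<^sup>2 + c\<^sup>2 + d\<^sup>2)) / sqrt (5^l)"
    by (simp add: norm_scalar_mult_vec2 norm_vec2 norm_divide norm_power s5_def cmod_power2
        add.assoc real_sqrt_power)
  also have "\<dots> = 1 \<longleftrightarrow> of_int (a\<^sup>2 + b\<^sup>2 + c\<^sup>2 + d\<^sup>2) = (5::real)^l"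
    by (simp only: divide_eq_1_iff real_sqrt_eq_iff) simp
  finally show ?thesis
    using of_int_power_eq_of_int_cancel_iff[of "a\<^sup>2 + b\<^sup>2 + c\<^sup>2 + d\<^sup>2" 5 l] by simp
qed

lemma Pauli_V_circuit_to_e1:
  assumes "a\<^sup>2 + b\<^sup>2 + c\<^sup>2 + d\<^sup>2 = 5^l"
  shows "\<exists>W. V_count W = l \<and>
    circuit_mat W *v ((1 / s5^l) *s vec2 (gauss a b) (gauss c d)) = vec2 1 0"
  using assms
proof (induction l arbitrary: a b c d)
  case 0
  then show ?case using Pauli_circuit_to_e1 by simp
next
  case (Suc l)
  have "5 dvd a\<^sup>2 + b\<^sup>2 + c\<^sup>2 + d\<^sup>2" using Suc.prems by simp
  then obtain G \<alpha>' \<beta>' where G: "V_count G = 1" "gauss_int \<alpha>'" "gauss_int \<beta>'"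
    and "circuit_mat G *v vec2 (gauss a b) (gauss c d) = s5 *s vec2 \<alpha>' \<beta>'"
    by (rule one_V_circuit_extracts_s5)
  moreover obtain A B C D where "\<alpha>' = gauss A B" "\<beta>' = gauss C D"
    using G gauss_int_iff by blast
  ultimately have step:
    "circuit_mat G *v vec2 (gauss a b) (gauss c d) = s5 *s vec2 (gauss A B) (gauss C D)"
    by simp
  let ?u = "(1 / s5^Suc l) *s vec2 (gauss a b) (gauss c d)"
  have image: "circuit_mat G *v ?u = (1 / s5^l) *s vec2 (gauss A B) (gauss C D)"
    using s5_nonzero by (simp add: vector_scalar_commute step)
  have "norm (circuit_mat G *v ?u) = 1"
    unfolding norm_circuit_mat_vec norm_scaled_gauss_vec2_eq_1_iff by (rule Suc.prems)
  then obtain W where "V_count W = l" "circuit_mat W *v (circuit_mat G *v ?u) = vec2 1 0"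
    using Suc.IH unfolding image norm_scaled_gauss_vec2_eq_1_iff by blast
  then show ?case
    using G by (intro exI[of _ "W @ G"]) (simp add: V_count_append circuit_mat_append_vec)
qed

theorem lemma6p10:
  fixes u :: "complex^2" and l :: nat and \<alpha> \<beta> :: complex
  assumes "norm u = 1"
    and "gauss_int \<alpha>" and "gauss_int \<beta>"
    and "u = (1 / complex_of_real (sqrt 5 ^ l)) *s vec2 \<alpha> \<beta>"
    and "lde u = (0, l)"
  shows "\<exists>W. V_count W = l \<and> circuit_mat W *v u = vec2 1 0"
proof -
  obtain a b c d where "\<alpha> = gauss a b" "\<beta> = gauss c d"
    using assms(2,3) gauss_int_iff by metis
  then have u: "u = (1 / s5^l) *s vec2 (gauss a b) (gauss c d)"
    using assms(4) by (simp add: s5_def)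
  then have "a\<^sup>2 + b\<^sup>2 + c\<^sup>2 + d\<^sup>2 = 5^l"
    using assms(1) norm_scaled_gauss_vec2_eq_1_iff by blast
  then show ?thesis unfolding u by (rule Pauli_V_circuit_to_e1)
qed

end
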